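(* Let $n\ge 5$ and let $G\in \Theta_n$. (1) $\mathrm{irr}_t(G)\ge 2n-4$. Equality holds if and only if the degree sequence of $G$ is $(3,3,2,\ldots,2)$, i.e. two vertices of degree $3$ and $n-2$ vertices of degree $2$. (2) If the degree sequence of $G$ is not $(3,3,2,\ldots,2)$, then $\mathrm{irr}_t(G)\ge 4n-10$. Equality holds if and only if the degree sequence of $G$ is $(3,3,3,2,\ldots,2,1)$, i.e. three vertices of degree $3$, $n-4$ vertices of degree $2$ and one vertex of degree $1$.
   Context: A bicyclic graph is a simple connected graph whose number of edges equals its number of vertices plus one. For a graph $G=(V,E)$ and $w\in V$, $d_G(w)$ is the degree of $w$. The total irregularity is $\mathrm{irr}_t(G)=\frac12\sum_{x,y\in V}|d_G(x)-d_G(y)|$, where the sum runs over all ordered pairs of vertices. Degree sequences are listed in nonincreasing order. For $p,q\ge 3$ and $l\ge 2$, the $\Theta$-graph $\theta(p,q,l)$ is the graph on $p+q-l$ vertices consisting of two cycles $C_p$ and $C_q$ that have exactly $l$ common vertices, forming a common path. Equivalently, it consists of two vertices joined by three internally disjoint paths. $\Theta_n$ denotes the set of bicyclic graphs on $n$ vertices obtained from some $\theta(p,q,l)$ by attaching trees. *)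

theory Defs
  imports Main "HOL-Library.Multiset" Complex_Main
begin

definition simple_graph :: "'a set \<Rightarrow> 'a set set \<Rightarrow> bool" where
  "simple_graph V E \<longleftrightarrow> finite V \<and> (\<forall>e\<in>E. e \<subseteq> V \<and> card e = 2)"

definition degree :: "'a set set \<Rightarrow> 'a \<Rightarrow> nat" where
  "degree E v = card {e\<in>E. v \<in> e}"

definition is_walk :: "'a set \<Rightarrow> 'a set set \<Rightarrow> 'a list \<Rightarrow> bool" where
  "is_walk V E xs \<longleftrightarrow> xs \<noteq> [] \<and> set xs \<subseteq> V \<and>
     (\<forall>i. Suc i < length xs \<longrightarrow> {xs ! i, xs ! Suc i} \<in> E)"

definition connected_by :: "'a set \<Rightarrow> 'a set set \<Rightarrow> 'a \<Rightarrow> 'a \<Rightarrow> bool" where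
  "connected_by V E u v \<longleftrightarrow> (\<exists>xs. is_walk V E xs \<and> hd xs = u \<and> last xs = v)"

definition connected_graph :: "'a set \<Rightarrow> 'a set set \<Rightarrow> bool" where
  "connected_graph V E \<longleftrightarrow> V \<noteq> {} \<and> (\<forall>u\<in>V. \<forall>v\<in>V. connected_by V E u v)"

definition bicyclic :: "'a set \<Rightarrow> 'a set set \<Rightarrow> bool" where
  "bicyclic V E \<longleftrightarrow> simple_graph V E \<and> connected_graph V E \<and> card E = card V + 1"

definition is_path :: "'a set \<Rightarrow> 'a set set \<Rightarrow> 'a list \<Rightarrow> bool" where
  "is_path V E xs \<longleftrightarrow> is_walk V E xs \<and> distinct xs \<and> length xs \<ge> 2"

definition path_edges :: "'a list \<Rightarrow> 'a set set" where
  "path_edges xs = {{xs ! i, xs ! Suc i} | i. Suc i < length xs}"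

definition is_cycle :: "'a set \<Rightarrow> 'a set set \<Rightarrow> 'a list \<Rightarrow> bool" where
  "is_cycle V E xs \<longleftrightarrow> is_walk V E xs \<and> distinct xs \<and> length xs \<ge> 3 \<and>
     {last xs, hd xs} \<in> E"

definition acyclic_graph :: "'a set \<Rightarrow> 'a set set \<Rightarrow> bool" where
  "acyclic_graph V E \<longleftrightarrow> \<not> (\<exists>xs. is_cycle V E xs)"

text \<open>Theta-graph theta(p,q,l) as a subgraph, given by three internally disjoint paths
  P1, P2, P3 between two vertices u and v.  P1 is the common path of l = length P1 \<ge> 2
  vertices; the cycles are C_p = P1 \<union> P2 and C_q = P1 \<union> P3 with
  p = length P1 + length P2 - 2 \<ge> 3 and q = length P1 + length P3 - 2 \<ge> 3.\<close>
definition theta_paths :: "'a set \<Rightarrow> 'a set set \<Rightarrow> 'a list \<Rightarrow> 'a list \<Rightarrow> 'a list \<Rightarrow> bool" where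
  "theta_paths V E P1 P2 P3 \<longleftrightarrow>
     is_path V E P1 \<and> is_path V E P2 \<and> is_path V E P3 \<and>
     length P2 \<ge> 3 \<and> length P3 \<ge> 3 \<and>
     hd P2 = hd P1 \<and> hd P3 = hd P1 \<and> last P2 = last P1 \<and> last P3 = last P1 \<and>
     set P1 \<inter> set P2 = {hd P1, last P1} \<and>
     set P1 \<inter> set P3 = {hd P1, last P1} \<and>
     set P2 \<inter> set P3 = {hd P1, last P1}"

text \<open>Theta_n: bicyclic graphs obtained from a theta-graph H (vertices VH, edges EH)
  by attaching trees: the remaining edges E - EH form a forest on V in which every
  vertex is joined to exactly one vertex of H.\<close>
definition Theta_class :: "'a set \<Rightarrow> 'a set set \<Rightarrow> bool" where
  "Theta_class V E \<longleftrightarrow> bicyclic V E \<and>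
     (\<exists>P1 P2 P3. theta_paths V E P1 P2 P3 \<and>
        (let VH = set P1 \<union> set P2 \<union> set P3;
             EH = path_edges P1 \<union> path_edges P2 \<union> path_edges P3
         in acyclic_graph V (E - EH) \<and>
            (\<forall>w\<in>V. \<exists>!h. h \<in> VH \<and> connected_by V (E - EH) w h)))"

definition irr_t :: "'a set \<Rightarrow> 'a set set \<Rightarrow> real" where
  "irr_t V E = (1/2) * (\<Sum>x\<in>V. \<Sum>y\<in>V. \<bar>real (degree E x) - real (degree E y)\<bar>)"

text \<open>Degree sequence as a multiset (the nonincreasing sequence up to ordering).\<close>
definition degree_mset :: "'a set \<Rightarrow> 'a set set \<Rightarrow> nat multiset" where
  "degree_mset V E = image_mset (degree E) (mset_set V)"

end

theory Submission
  imports Defs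
begin

text \<open>Only the degree multiset matters. The degrees of a graph in \<open>\<Theta>\<^sub>n\<close> are n positive
  numbers with sum 2n + 2, and the two branch vertices of the theta-subgraph have degree at
  least 3. Split the degrees into the part A of degrees \<open>\<ge> 3\<close>, b twos and c ones, and let
  a = |A|. The degree sum gives \<open>\<Sum>A = 2a + c + 2\<close>, so A exceeds every 2 by c + 2 in total and
  every 1 by a + c + 2, whence irr_t \<open>\<ge>\<close> b(c + 2) + c(a + c + 2) + bc. If c = 0 then a = 2 and
  A = {3, 3}. If c \<open>\<ge>\<close> 1 then, using 2 \<open>\<le>\<close> a \<open>\<le>\<close> c + 2, this bound is at least 4n - 10 with
  equality only for c = 1 and a = 3, which forces A = {3, 3, 3}.\<close>

definition abs_diff_sum :: "nat multiset \<Rightarrow> nat multiset \<Rightarrow> real" where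
  "abs_diff_sum X Y = (\<Sum>a\<in>#X. \<Sum>b\<in>#Y. \<bar>real a - real b\<bar>)"

lemma abs_diff_sum_union_left [simp]:
  "abs_diff_sum (X + Y) Z = abs_diff_sum X Z + abs_diff_sum Y Z"
  by (simp add: abs_diff_sum_def)

lemma abs_diff_sum_union_right [simp]:
  "abs_diff_sum X (Y + Z) = abs_diff_sum X Y + abs_diff_sum X Z"
  by (simp add: abs_diff_sum_def sum_mset.distrib)

lemma abs_diff_sum_replicate_left [simp]:
  "abs_diff_sum (replicate_mset k x) Y = real k * (\<Sum>b\<in>#Y. \<bar>real x - real b\<bar>)"
  by (simp add: abs_diff_sum_def)

lemma abs_diff_sum_replicate_right [simp]:
  "abs_diff_sum X (replicate_mset k y) = real k * (\<Sum>a\<in>#X. \<bar>real a - real y\<bar>)"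
  by (simp add: abs_diff_sum_def sum_mset_distrib_left)

lemma abs_diff_sum_nonneg: "0 \<le> abs_diff_sum X Y"
  unfolding abs_diff_sum_def by (intro sum_mset_mono[of _ "\<lambda>_. 0", simplified] abs_ge_zero)

lemma sum_abs_diff_eq_if_ge:
  assumes "\<forall>x\<in>#A. k \<le> x"
  shows "(\<Sum>a\<in>#A. \<bar>real a - real k\<bar>) = real (sum_mset A) - real k * real (size A)"
  using assms by (induction A) (auto simp: algebra_simps)

lemma mult_size_le_sum_mset:
  assumes "\<forall>x\<in>#A. k \<le> x"
  shows "k * size A \<le> sum_mset A"
  using assms by (induction A) auto

lemma eq_replicate_mset_if_sum_mset_le:
  assumes "\<forall>x\<in>#A. k \<le> x" and "sum_mset A \<le> k * size A"
  shows "A = replicate_mset (size A) k"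
  using assms
proof (induction A)
  case (add x A)
  then have "k * size A \<le> sum_mset A" by (intro mult_size_le_sum_mset) auto
  with add.prems have "x = k" "sum_mset A \<le> k * size A" by auto
  with add show ?case by auto
qed simp

lemma mset_split_small_values:
  fixes M :: "nat multiset"
  assumes "0 \<notin># M"
  shows "M = filter_mset (\<lambda>x. 3 \<le> x) M + replicate_mset (count M 2) 2 + replicate_mset (count M 1) 1"
proof (rule multiset_eqI)
  fix x
  show "count M x = count (filter_mset (\<lambda>x. 3 \<le> x) M + replicate_mset (count M 2) 2
      + replicate_mset (count M 1) 1) x"
    using assms by (cases "x = 0"; cases "x = 1"; cases "x = 2") (auto simp: count_eq_zero_iff)
qed

lemma abs_diff_sum_split_small_values:
  assumes "\<forall>x\<in>#A. 2 \<le> x"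
  shows "abs_diff_sum (A + replicate_mset b 2 + replicate_mset c 1)
                      (A + replicate_mset b 2 + replicate_mset c 1)
    = abs_diff_sum A A + 2 * real b * (real (sum_mset A) - 2 * real (size A))
      + 2 * real c * (real (sum_mset A) - real (size A)) + 2 * real b * real c"
proof -
  have flip: "(\<Sum>a\<in>#A. \<bar>k - real a\<bar>) = (\<Sum>a\<in>#A. \<bar>real a - k\<bar>)" for k :: real
    by (simp add: abs_minus_commute)
  have "\<forall>x\<in>#A. 1 \<le> x" using assms by auto
  then have excess:
    "(\<Sum>a\<in>#A. \<bar>real a - 2\<bar>) = real (sum_mset A) - 2 * real (size A)"
    "(\<Sum>a\<in>#A. \<bar>real a - 1\<bar>) = real (sum_mset A) - real (size A)"
    using sum_abs_diff_eq_if_ge[of A 2] sum_abs_diff_eq_if_ge[of A 1] assms by simp_all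
  show ?thesis by (simp add: flip excess algebra_simps)
qed

lemma abs_diff_sum_two_threes:
  assumes "2 \<le> n"
  shows "abs_diff_sum (replicate_mset 2 3 + replicate_mset (n - 2) 2)
                      (replicate_mset 2 3 + replicate_mset (n - 2) 2) / 2 = 2 * real n - 4"
  using assms by (simp add: of_nat_diff)

lemma abs_diff_sum_three_threes_one:
  assumes "4 \<le> n"
  shows "abs_diff_sum (replicate_mset 3 3 + replicate_mset (n - 4) 2 + {#1#})
                      (replicate_mset 3 3 + replicate_mset (n - 4) 2 + {#1#}) / 2 = 4 * real n - 10"
  using assms by (simp add: abs_diff_sum_def of_nat_diff)

lemma low_degree_excess_bound:
  fixes a b c :: nat
  assumes "1 \<le> c" "2 \<le> a" "a \<le> c + 2"
  shows "4 * (a + b + c) \<le> b * (c + 2) + c * (a + c + 2) + b * c + 10"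
    and "4 * (a + b + c) = b * (c + 2) + c * (a + c + 2) + b * c + 10 \<Longrightarrow> c = 1 \<and> a = 3"
proof -
  have "b * 1 \<le> b * c" using assms(1) by (intro mult_le_mono2)
  moreover have "b * (c + 2) + b * c = 2 * (b * c) + 2 * b" by (simp add: algebra_simps)
  ultimately have twos: "4 * b \<le> b * (c + 2) + b * c" by linarith
  have ones: "c = 1 \<and> a = 3 \<or> 4 * a + 4 * c < c * (a + c + 2) + 10"
  proof (cases "4 \<le> c")
    case True
    then have "4 * a \<le> c * a" "4 * c \<le> c * c" by (simp_all add: mult_right_mono)
    moreover have "c * (a + c + 2) = c * a + c * c + 2 * c" by (simp add: algebra_simps)
    ultimately show ?thesis by linarith
  next
    case False
    then have "c = 1 \<or> c = 2 \<or> c = 3" using assms(1) by auto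
    then show ?thesis using assms by auto
  qed
  show "4 * (a + b + c) \<le> b * (c + 2) + c * (a + c + 2) + b * c + 10"
    using twos ones by auto
  show "c = 1 \<and> a = 3" if "4 * (a + b + c) = b * (c + 2) + c * (a + c + 2) + b * c + 10"
    using that twos ones by auto
qed

lemma degree_mset_decomposition:
  fixes M :: "nat multiset"
  assumes "size M = n" and "0 \<notin># M" and "sum_mset M = 2 * n + 2"
  obtains b c where "M = filter_mset (\<lambda>x. 3 \<le> x) M + replicate_mset b 2 + replicate_mset c 1"
    and "n = size (filter_mset (\<lambda>x. 3 \<le> x) M) + b + c"
    and "sum_mset (filter_mset (\<lambda>x. 3 \<le> x) M) = 2 * size (filter_mset (\<lambda>x. 3 \<le> x) M) + c + 2"
proof
  let ?A = "filter_mset (\<lambda>x. 3 \<le> x) M"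
  note split = mset_split_small_values[OF assms(2)]
  show "n = size ?A + count M 2 + count M 1"
    using arg_cong[OF split, of size] assms(1) by simp
  moreover have "sum_mset M = sum_mset ?A + 2 * count M 2 + count M 1"
    by (subst split) simp
  ultimately show "sum_mset ?A = 2 * size ?A + count M 1 + 2"
    using assms(3) by simp
qed (rule mset_split_small_values[OF assms(2)])

lemma abs_diff_sum_bound_with_ones:
  fixes A :: "nat multiset" and b c :: nat
  assumes A_ge_3: "\<forall>x\<in>#A. 3 \<le> x" and sum_A: "sum_mset A = 2 * size A + c + 2"
    and "1 \<le> c" and "2 \<le> size A"
  defines "M \<equiv> A + replicate_mset b 2 + replicate_mset c 1" and "n \<equiv> size A + b + c"
  shows "4 * real n - 10 \<le> abs_diff_sum M M / 2"
    and "abs_diff_sum M M / 2 = 4 * real n - 10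
      \<Longrightarrow> M = replicate_mset 3 3 + replicate_mset (n - 4) 2 + {#1#}"
proof -
  define a where "a = size A"
  have "3 * a \<le> sum_mset A" unfolding a_def using A_ge_3 by (rule mult_size_le_sum_mset)
  then have "a \<le> c + 2" using sum_A unfolding a_def by simp
  define excess where "excess = b * (c + 2) + c * (a + c + 2) + b * c"
  note bound = low_degree_excess_bound[OF \<open>1 \<le> c\<close> \<open>2 \<le> size A\<close>[folded a_def] \<open>a \<le> c + 2\<close>,
      of b, folded excess_def, unfolded a_def, folded n_def]
  have "\<forall>x\<in>#A. 2 \<le> x" using A_ge_3 by auto
  from abs_diff_sum_split_small_values[OF this, of b c]
  have irr: "abs_diff_sum M M / 2 = abs_diff_sum A A / 2 + real excess"
    unfolding M_def[symmetric] sum_A excess_def a_def by (simp add: algebra_simps)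
  have "4 * real n \<le> real excess + 10" using bound(1) by linarith
  then show "4 * real n - 10 \<le> abs_diff_sum M M / 2"
    using irr abs_diff_sum_nonneg[of A A] by linarith
  assume "abs_diff_sum M M / 2 = 4 * real n - 10"
  then have "4 * n = excess + 10"
    using irr abs_diff_sum_nonneg[of A A] \<open>4 * real n \<le> real excess + 10\<close> by linarith
  then have "c = 1" "size A = 3" using bound(2) by auto
  moreover from this have "A = replicate_mset 3 3"
    using eq_replicate_mset_if_sum_mset_le[OF A_ge_3] sum_A by simp
  ultimately show "M = replicate_mset 3 3 + replicate_mset (n - 4) 2 + {#1#}"
    unfolding M_def n_def by simp
qed

lemma abs_diff_sum_degree_bounds:
  fixes M :: "nat multiset" and n :: nat
  assumes "size M = n" and "0 \<notin># M" and "sum_mset M = 2 * n + 2"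
    and branch: "2 \<le> size (filter_mset (\<lambda>x. 3 \<le> x) M)" and "5 \<le> n"
  defines "M\<^sub>1 \<equiv> replicate_mset 2 3 + replicate_mset (n - 2) 2"
    and "M\<^sub>2 \<equiv> replicate_mset 3 3 + replicate_mset (n - 4) 2 + {#1#}"
  shows "abs_diff_sum M M / 2 \<ge> 2 * real n - 4
    \<and> (abs_diff_sum M M / 2 = 2 * real n - 4 \<longleftrightarrow> M = M\<^sub>1)
    \<and> (M \<noteq> M\<^sub>1 \<longrightarrow> abs_diff_sum M M / 2 \<ge> 4 * real n - 10
         \<and> (abs_diff_sum M M / 2 = 4 * real n - 10 \<longleftrightarrow> M = M\<^sub>2))"
proof -
  define A where "A = filter_mset (\<lambda>x. 3 \<le> x) M"
  obtain b c where split: "M = A + replicate_mset b 2 + replicate_mset c 1"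
    and n: "n = size A + b + c" and sum_A: "sum_mset A = 2 * size A + c + 2"
    using degree_mset_decomposition assms(1-3) unfolding A_def by blast
  have A_ge_3: "\<forall>x\<in>#A. 3 \<le> x" unfolding A_def by simp
  have "count M\<^sub>1 1 \<noteq> count M\<^sub>2 1" unfolding M\<^sub>1_def M\<^sub>2_def by simp
  then have "M\<^sub>1 \<noteq> M\<^sub>2" by metis
  moreover have "abs_diff_sum M\<^sub>1 M\<^sub>1 / 2 = 2 * real n - 4"
    unfolding M\<^sub>1_def using assms(5) by (intro abs_diff_sum_two_threes) simp
  moreover have "abs_diff_sum M\<^sub>2 M\<^sub>2 / 2 = 4 * real n - 10"
    unfolding M\<^sub>2_def using assms(5) by (intro abs_diff_sum_three_threes_one) simp
  moreover have "M = M\<^sub>1" if "c = 0"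
  proof -
    have "size A = 2"
      using mult_size_le_sum_mset[OF A_ge_3] sum_A branch that unfolding A_def by simp
    then have "A = replicate_mset 2 3"
      using eq_replicate_mset_if_sum_mset_le[OF A_ge_3] sum_A that by simp
    then show ?thesis using split n that \<open>size A = 2\<close> unfolding M\<^sub>1_def by simp
  qed
  moreover have "4 * real n - 10 \<le> abs_diff_sum M M / 2"
    and "abs_diff_sum M M / 2 = 4 * real n - 10 \<Longrightarrow> M = M\<^sub>2" if "1 \<le> c"
    using abs_diff_sum_bound_with_ones[OF A_ge_3 sum_A that, of b] branch
    unfolding A_def[symmetric] split[symmetric] n[symmetric] M\<^sub>2_def by simp_all
  ultimately show ?thesis using assms(5) by (cases "c = 0") auto
qed

lemma simple_graph_finite_edges: "simple_graph V E \<Longrightarrow> finite E"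
  unfolding simple_graph_def by (metis Pow_iff finite_Pow_iff finite_subset subsetI)
lemma degree_ge_3:
  assumes "finite E" and "{w, x} \<in> E" "{w, y} \<in> E" "{w, z} \<in> E"
    and "w \<notin> {x, y, z}" "x \<noteq> y" "x \<noteq> z" "y \<noteq> z"
  shows "3 \<le> degree E w"
proof -
  have "{w, x} \<noteq> {w, y}" "{w, x} \<noteq> {w, z}" "{w, y} \<noteq> {w, z}"
    using assms(5-) by (auto simp: doubleton_eq_iff)
  then have "card {{w, x}, {w, y}, {w, z}} = 3" by simp
  moreover have "card {{w, x}, {w, y}, {w, z}} \<le> card {e\<in>E. w \<in> e}"
    using assms(1-4) by (intro card_mono) auto
  ultimately show ?thesis unfolding degree_def by simp
qed

lemma degree_pos_if_connected:
  assumes "simple_graph V E" "connected_graph V E" "u \<in> V" "v \<in> V" "u \<noteq> v"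
  shows "0 < degree E v"
proof -
  obtain xs where walk: "is_walk V E xs" "hd xs = v" "last xs = u"
    using assms(2-4) unfolding connected_graph_def connected_by_def by blast
  then have "Suc 0 < length xs"
    using assms(5) by (cases xs) (auto simp: is_walk_def)
  then have "{v, xs ! 1} \<in> {e\<in>E. v \<in> e}"
    using walk unfolding is_walk_def by (auto simp: hd_conv_nth)
  then show ?thesis
    unfolding degree_def using simple_graph_finite_edges[OF assms(1)] by (auto simp: card_gt_0_iff)
qed

lemma sum_degree_eq_twice_card_edges:
  assumes "simple_graph V E"
  shows "(\<Sum>v\<in>V. degree E v) = 2 * card E"
proof -
  have fin: "finite E" "finite V"
    using assms simple_graph_finite_edges unfolding simple_graph_def by auto
  have "(\<Sum>v\<in>V. degree E v) = (\<Sum>v\<in>V. \<Sum>e\<in>E. if v \<in> e then 1 else 0)"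
    unfolding degree_def by (simp only: card_eq_sum sum.inter_filter[OF fin(1)])
  also have "\<dots> = (\<Sum>e\<in>E. \<Sum>v\<in>V. if v \<in> e then 1 else 0)" by (rule sum.swap)
  also have "\<dots> = (\<Sum>e\<in>E. card e)"
  proof (rule sum.cong)
    fix e assume "e \<in> E"
    then have "{v\<in>V. v \<in> e} = e" using assms unfolding simple_graph_def by auto
    moreover have "(\<Sum>v\<in>V. if v \<in> e then 1 else 0) = card {v\<in>V. v \<in> e}"
      by (simp only: card_eq_sum sum.inter_filter[OF fin(2)])
    ultimately show "(\<Sum>v\<in>V. if v \<in> e then 1 else 0) = card e" by simp
  qed simp
  also have "\<dots> = 2 * card E" using assms unfolding simple_graph_def by simp
  finally show ?thesis .
qed

lemma is_path_rev:
  assumes "is_path V E xs"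
  shows "is_path V E (rev xs)"
  unfolding is_path_def is_walk_def
proof (intro conjI allI impI)
  fix i assume i: "Suc i < length (rev xs)"
  define j where "j = length xs - Suc (Suc i)"
  have "Suc j < length xs" "length xs - Suc i = Suc j" using i unfolding j_def by auto
  then have "{xs ! j, xs ! Suc j} \<in> E" using assms unfolding is_path_def is_walk_def by blast
  then show "{rev xs ! i, rev xs ! Suc i} \<in> E"
    using i by (simp add: rev_nth j_def \<open>length xs - Suc i = Suc j\<close> insert_commute)
qed (use assms in \<open>auto simp: is_path_def is_walk_def\<close>)

lemma theta_paths_rev:
  "theta_paths V E P1 P2 P3 \<Longrightarrow> theta_paths V E (rev P1) (rev P2) (rev P3)"
  unfolding theta_paths_def by (auto simp: is_path_rev hd_rev last_rev insert_commute)

lemma path_second_vertex: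
  assumes "is_path V E P"
  shows "{hd P, P ! 1} \<in> E" and "P ! 1 \<noteq> hd P" and "P ! 1 \<in> set P"
    and "3 \<le> length P \<Longrightarrow> P ! 1 \<noteq> last P"
proof -
  have len: "2 \<le> length P" "P \<noteq> []" "distinct P" using assms unfolding is_path_def by auto
  then show "{hd P, P ! 1} \<in> E"
    using assms unfolding is_path_def is_walk_def by (auto simp: hd_conv_nth)
  show "P ! 1 \<noteq> hd P" "P ! 1 \<in> set P"
    using len by (auto simp: hd_conv_nth nth_eq_iff_index_eq)
  show "P ! 1 \<noteq> last P" if "3 \<le> length P"
    using len that by (auto simp: last_conv_nth nth_eq_iff_index_eq)
qed

lemma theta_paths_hd_degree_ge_3:
  assumes "finite E" and "theta_paths V E P1 P2 P3"
  shows "3 \<le> degree E (hd P1)"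
proof -
  let ?u = "hd P1" and ?v = "last P1"
  have paths: "is_path V E P1" "is_path V E P2" "is_path V E P3" "3 \<le> length P2" "3 \<le> length P3"
    and ends: "hd P2 = ?u" "hd P3 = ?u" "last P2 = ?v" "last P3 = ?v"
    and meets: "set P1 \<inter> set P2 = {?u, ?v}" "set P1 \<inter> set P3 = {?u, ?v}"
      "set P2 \<inter> set P3 = {?u, ?v}"
    using assms(2) unfolding theta_paths_def by auto
  note second = path_second_vertex[OF paths(1)] path_second_vertex[OF paths(2)]
    path_second_vertex[OF paths(3)]
  have "P2 ! 1 \<notin> {?u, ?v}" "P3 ! 1 \<notin> {?u, ?v}"
    using second paths(4,5) ends by auto
  then have "P2 ! 1 \<notin> set P1 \<union> set P3" "P3 ! 1 \<notin> set P1"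
    using second meets by blast+
  then show ?thesis
    using second ends by (intro degree_ge_3[OF assms(1), of _ "P1 ! 1" "P2 ! 1" "P3 ! 1"]) auto
qed

lemma Theta_class_two_degrees_ge_3:
  assumes "Theta_class V E"
  shows "2 \<le> size (filter_mset (\<lambda>x. 3 \<le> x) (degree_mset V E))"
proof -
  obtain P1 P2 P3 where theta: "theta_paths V E P1 P2 P3"
    using assms unfolding Theta_class_def by blast
  have sg: "simple_graph V E" using assms unfolding Theta_class_def bicyclic_def by blast
  then have fin: "finite E" "finite V" using simple_graph_finite_edges simple_graph_def by auto
  have "is_path V E P1" using theta unfolding theta_paths_def by blast
  then have "hd P1 \<noteq> last P1" "{hd P1, last P1} \<subseteq> V"
    unfolding is_path_def is_walk_def by (auto simp: hd_conv_nth last_conv_nth nth_eq_iff_index_eq)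
  moreover have "3 \<le> degree E (hd P1)" "3 \<le> degree E (last P1)"
    using theta_paths_hd_degree_ge_3[OF fin(1) theta]
      theta_paths_hd_degree_ge_3[OF fin(1) theta_paths_rev[OF theta]] by (simp_all add: hd_rev)
  ultimately have "2 \<le> card {v\<in>V. 3 \<le> degree E v}"
    using fin(2) card_mono[of "{v\<in>V. 3 \<le> degree E v}" "{hd P1, last P1}"] by auto
  then show ?thesis
    unfolding degree_mset_def filter_mset_image_mset filter_mset_mset_set[OF fin(2)] by simp
qed

lemma zero_not_in_degree_mset:
  assumes "simple_graph V E" and "connected_graph V E" and "2 \<le> card V"
  shows "0 \<notin># degree_mset V E"
proof -
  have fin: "finite V" using assms(1) unfolding simple_graph_def by blast
  have "0 < degree E v" if "v \<in> V" for v
  proof -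
    have "\<not> V \<subseteq> {v}"
    proof
      assume "V \<subseteq> {v}"
      then have "card V \<le> card {v}" by (intro card_mono) auto
      with assms(3) show False by simp
    qed
    then obtain u where "u \<in> V" "u \<noteq> v" by blast
    then show ?thesis using degree_pos_if_connected[OF assms(1,2) _ that] by blast
  qed
  then show ?thesis unfolding degree_mset_def using fin by fastforce
qed

lemma irr_t_eq_abs_diff_sum:
  "irr_t V E = abs_diff_sum (degree_mset V E) (degree_mset V E) / 2"
  unfolding irr_t_def degree_mset_def abs_diff_sum_def
  by (simp add: sum_unfold_sum_mset multiset.map_comp o_def)

theorem theorem14:
  fixes V :: "'a set" and E :: "'a set set" and n :: nat
  assumes "Theta_class V E" and "card V = n" and "n \<ge> 5"
  shows "irr_t V E \<ge> 2 * real n - 4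
    \<and> (irr_t V E = 2 * real n - 4 \<longleftrightarrow>
         degree_mset V E = replicate_mset 2 3 + replicate_mset (n - 2) 2)
    \<and> (degree_mset V E \<noteq> replicate_mset 2 3 + replicate_mset (n - 2) 2 \<longrightarrow>
         irr_t V E \<ge> 4 * real n - 10
         \<and> (irr_t V E = 4 * real n - 10 \<longleftrightarrow>
              degree_mset V E = replicate_mset 3 3 + replicate_mset (n - 4) 2 + {#1#}))"
proof -
  have sg: "simple_graph V E" and cg: "connected_graph V E" and edges: "card E = n + 1"
    using assms(1,2) unfolding Theta_class_def bicyclic_def by auto
  have "0 \<notin># degree_mset V E" using sg cg assms(2,3) by (intro zero_not_in_degree_mset) auto
  moreover have "sum_mset (degree_mset V E) = 2 * n + 2"
    using sum_degree_eq_twice_card_edges[OF sg] edges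
    unfolding degree_mset_def by (simp add: sum_unfold_sum_mset)
  moreover have "size (degree_mset V E) = n" using assms(2) unfolding degree_mset_def by simp
  ultimately show ?thesis
    unfolding irr_t_eq_abs_diff_sum
    using abs_diff_sum_degree_bounds Theta_class_two_degrees_ge_3[OF assms(1)] assms(3) by blast
qed

end
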